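(* Let $S_1$ be a set with $|S_1| \le k$ satisfying $g(S_1) \ge (1 - 1/e)\max_{S \subseteq V, |S| \le k} g(S)$ (e.g., the output of the classic greedy algorithm), and let $S_2 = \{u,v\}$ with $\mathrm{dist}(u,v) = d_{\max}$, and assume $k \ge 2$. Then $$\max\{f(S_1), f(S_2)\} \ge \frac{e-1}{2e-1}\cdot \mathrm{OPT} \;(\approx 0.387\cdot\mathrm{OPT}).$$
   Context: Let $V$ be a finite set of $n$ points in a metric space with metric $\mathrm{dist}$, and let $d_{\max} = \max_{u,v \in V}\mathrm{dist}(u,v)$. The max-min diversity is $\mathrm{div}(S) = \min_{u,v \in S,\, u \ne v}\mathrm{dist}(u,v)$ if $|S| \ge 2$, and $\mathrm{div}(S) = d_{\max}$ if $|S| \le 1$. Let $g : 2^V \to \mathbb{R}_{\ge 0}$ be a nonnegative monotone submodular function, $\lambda \ge 0$, $k \ge 1$ an integer, and $f(S) = g(S) + \lambda\cdot \mathrm{div}(S)$. $\mathrm{OPT} = \max_{S \subseteq V, |S| \le k} f(S)$. *)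

theory Defs
  imports "HOL-Analysis.Analysis"
begin

definition metric_on :: "'a set \<Rightarrow> ('a \<Rightarrow> 'a \<Rightarrow> real) \<Rightarrow> bool" where
  "metric_on V d \<longleftrightarrow>
     (\<forall>x\<in>V. \<forall>y\<in>V. d x y \<ge> 0) \<and>
     (\<forall>x\<in>V. \<forall>y\<in>V. d x y = 0 \<longleftrightarrow> x = y) \<and>
     (\<forall>x\<in>V. \<forall>y\<in>V. d x y = d y x) \<and>
     (\<forall>x\<in>V. \<forall>y\<in>V. \<forall>z\<in>V. d x z \<le> d x y + d y z)"

definition dmax :: "'a set \<Rightarrow> ('a \<Rightarrow> 'a \<Rightarrow> real) \<Rightarrow> real" where
  "dmax V d = Max {d u v | u v. u \<in> V \<and> v \<in> V}"

definition diversity :: "'a set \<Rightarrow> ('a \<Rightarrow> 'a \<Rightarrow> real) \<Rightarrow> 'a set \<Rightarrow> real" where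
  "diversity V d S = (if card S \<ge> 2 then Min {d u v | u v. u \<in> S \<and> v \<in> S \<and> u \<noteq> v}
                      else dmax V d)"

definition monotone_set_fun :: "'a set \<Rightarrow> ('a set \<Rightarrow> real) \<Rightarrow> bool" where
  "monotone_set_fun V g \<longleftrightarrow> (\<forall>A B. A \<subseteq> B \<and> B \<subseteq> V \<longrightarrow> g A \<le> g B)"

definition submodular :: "'a set \<Rightarrow> ('a set \<Rightarrow> real) \<Rightarrow> bool" where
  "submodular V g \<longleftrightarrow> (\<forall>A B. A \<subseteq> V \<and> B \<subseteq> V \<longrightarrow> g (A \<union> B) + g (A \<inter> B) \<le> g A + g B)"

definition objective :: "'a set \<Rightarrow> ('a \<Rightarrow> 'a \<Rightarrow> real) \<Rightarrow> ('a set \<Rightarrow> real) \<Rightarrow> real \<Rightarrow> 'a set \<Rightarrow> real" where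
  "objective V d g lam S = g S + lam * diversity V d S"

definition OPT :: "'a set \<Rightarrow> ('a \<Rightarrow> 'a \<Rightarrow> real) \<Rightarrow> ('a set \<Rightarrow> real) \<Rightarrow> real \<Rightarrow> nat \<Rightarrow> real" where
  "OPT V d g lam k = Max {objective V d g lam S | S. S \<subseteq> V \<and> card S \<le> k}"

definition gmax :: "'a set \<Rightarrow> ('a set \<Rightarrow> real) \<Rightarrow> nat \<Rightarrow> real" where
  "gmax V g k = Max {g S | S. S \<subseteq> V \<and> card S \<le> k}"

end

theory Submission
  imports Defs
begin

text \<open>Every admissible set S satisfies f(S) \<le> gmax + \<lambda> dmax, so OPT \<le> G + L with
  G = gmax and L = \<lambda> dmax. The greedy set gives f(S1) \<ge> a G with a = 1 - 1/e, and the
  diametral pair gives f({u,v}) \<ge> L. Weighting the two lower bounds by 1 and a,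
  (1 + a) max(f(S1), f({u,v})) \<ge> a (G + L) \<ge> a OPT, and a/(1 + a) = (e - 1)/(2e - 1).\<close>

lemma dmax_ge:
  assumes "finite V" "x \<in> V" "y \<in> V"
  shows "d x y \<le> dmax V d"
proof -
  have "finite {d u v | u v. u \<in> V \<and> v \<in> V}"
    using assms(1) by (simp add: finite_image_set2)
  thus ?thesis unfolding dmax_def using assms by (intro Max_ge) auto
qed

lemma two_le_card_obtain:
  assumes "2 \<le> card S"
  obtains a b where "a \<in> S" "b \<in> S" "a \<noteq> b"
proof -
  obtain T where "T \<subseteq> S" "card T = 2" using obtain_subset_with_card_n[OF assms] .
  with that show thesis by (auto simp: card_2_iff)
qed

lemma metric_on_nonneg: "metric_on V d \<Longrightarrow> x \<in> V \<Longrightarrow> y \<in> V \<Longrightarrow> 0 \<le> d x y"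
  unfolding metric_on_def by (elim conjE) simp

lemma metric_on_sym: "metric_on V d \<Longrightarrow> x \<in> V \<Longrightarrow> y \<in> V \<Longrightarrow> d x y = d y x"
  unfolding metric_on_def by (elim conjE) simp

lemma dmax_nonneg:
  assumes "finite V" "metric_on V d" "V \<noteq> {}"
  shows "0 \<le> dmax V d"
proof -
  obtain x where "x \<in> V" using assms(3) by blast
  then have "0 \<le> d x x" "d x x \<le> dmax V d"
    using metric_on_nonneg[OF assms(2)] dmax_ge[OF assms(1)] by auto
  then show ?thesis by linarith
qed

lemma
  assumes "finite V" "metric_on V d" "S \<subseteq> V" "V \<noteq> {}"
  shows diversity_nonneg: "0 \<le> diversity V d S"
    and diversity_le_dmax: "diversity V d S \<le> dmax V d"
proof -
  have "0 \<le> diversity V d S \<and> diversity V d S \<le> dmax V d"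
  proof (cases "2 \<le> card S")
    case True
    let ?M = "{d x y | x y. x \<in> S \<and> y \<in> S \<and> x \<noteq> y}"
    have "?M \<subseteq> (\<lambda>(x, y). d x y) ` (S \<times> S)" by auto
    moreover have "finite S" using assms(1,3) by (rule finite_subset[rotated])
    ultimately have fin: "finite ?M" by (simp add: finite_subset)
    obtain a b where ab: "a \<in> S" "b \<in> S" "a \<noteq> b" using two_le_card_obtain[OF True] .
    then have "d a b \<in> ?M" by blast
    with fin have "Min ?M \<le> d a b" by (rule Min_le)
    also have "d a b \<le> dmax V d" using ab assms(3) by (intro dmax_ge[OF assms(1)]) auto
    finally have "Min ?M \<le> dmax V d" .
    moreover have "0 \<le> Min ?M"
    proof (subst Min_ge_iff[OF fin])
      show "?M \<noteq> {}" using \<open>d a b \<in> ?M\<close> by blast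
      show "\<forall>m\<in>?M. 0 \<le> m" using assms(3) metric_on_nonneg[OF assms(2)] by blast
    qed
    ultimately show ?thesis using True unfolding diversity_def by simp
  next
    case False
    then show ?thesis using dmax_nonneg[OF assms(1,2,4)] unfolding diversity_def by simp
  qed
  then show "0 \<le> diversity V d S" "diversity V d S \<le> dmax V d" by auto
qed

lemma diversity_diametral_pair:
  assumes "metric_on V d" "u \<in> V" "v \<in> V" "d u v = dmax V d"
  shows "diversity V d {u, v} = dmax V d"
proof (cases "u = v")
  case False
  have "{d x y | x y. x \<in> {u, v} \<and> y \<in> {u, v} \<and> x \<noteq> y} = {d u v, d v u}"
    using False by auto
  moreover have "d v u = d u v" using metric_on_sym[OF assms(1,3,2)] .
  ultimately show ?thesis using False assms(4) unfolding diversity_def by simp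
qed (simp add: diversity_def)

lemma OPT_le_gmax_plus_dmax:
  assumes "finite V" "metric_on V d" "lam \<ge> 0" "V \<noteq> {}"
  shows "OPT V d g lam k \<le> gmax V g k + lam * dmax V d"
proof -
  have fin: "finite {S. S \<subseteq> V \<and> card S \<le> k}" using assms(1) by simp
  have "objective V d g lam S \<le> gmax V g k + lam * dmax V d"
    if S: "S \<subseteq> V" "card S \<le> k" for S
  proof -
    have "g S \<le> gmax V g k" unfolding gmax_def using fin S by (intro Max_ge) auto
    moreover have "lam * diversity V d S \<le> lam * dmax V d"
      using diversity_le_dmax[OF assms(1,2) S(1) assms(4)] assms(3) by (rule mult_left_mono)
    ultimately show ?thesis unfolding objective_def by simp
  qed
  moreover have "{S. S \<subseteq> V \<and> card S \<le> k} \<noteq> {}" by auto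
  ultimately show ?thesis unfolding OPT_def using fin by (subst Max_le_iff) auto
qed

lemma max_ge_convex_combination:
  fixes a G L B x y :: real
  assumes "0 < a" "a * G \<le> x" "L \<le> y" "B \<le> G + L"
  shows "a / (1 + a) * B \<le> max x y"
proof -
  have "a * B \<le> a * G + a * L" using assms(1,4) by (simp add: distrib_left[symmetric])
  also have "\<dots> \<le> max x y + a * max x y"
    using assms(1-3) by (intro add_mono mult_left_mono) auto
  finally show ?thesis using assms(1) by (simp add: field_simps)
qed

lemma greedy_ratio_eq: "(exp 1 - 1) / (2 * exp 1 - 1 :: real) = (1 - 1 / exp 1) / (1 + (1 - 1 / exp 1))"
proof -
  have "exp 1 \<noteq> (0::real)" by simp
  then have "(1 - 1 / exp 1) / (1 + (1 - 1 / exp 1)) = (exp 1 - 1) / exp 1 / ((2 * exp 1 - 1) / exp 1 :: real)"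
    by (simp add: diff_divide_distrib add_divide_distrib)
  then show ?thesis using \<open>exp 1 \<noteq> 0\<close> by simp
qed

theorem mainTheorem9:
  fixes V :: "'a set" and d :: "'a \<Rightarrow> 'a \<Rightarrow> real" and g :: "'a set \<Rightarrow> real"
    and lam :: real and k :: nat and S1 :: "'a set" and u v :: 'a
  assumes "finite V"
    and "metric_on V d"
    and "\<forall>S\<subseteq>V. g S \<ge> 0"
    and "monotone_set_fun V g"
    and "submodular V g"
    and "lam \<ge> 0"
    and "k \<ge> 2"
    and "S1 \<subseteq> V" and "card S1 \<le> k"
    and "g S1 \<ge> (1 - 1 / exp 1) * gmax V g k"
    and "u \<in> V" and "v \<in> V" and "d u v = dmax V d"
  shows "max (objective V d g lam S1) (objective V d g lam {u, v})
           \<ge> (exp 1 - 1) / (2 * exp 1 - 1) * OPT V d g lam k"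
proof -
  have "V \<noteq> {}" using assms(11) by blast
  have "0 < 1 - 1 / exp (1::real)" by (simp add: field_simps)
  moreover have "(1 - 1 / exp 1) * gmax V g k \<le> objective V d g lam S1"
    using assms(10) diversity_nonneg[OF assms(1,2,8) \<open>V \<noteq> {}\<close>] assms(6)
    unfolding objective_def by (simp add: add_increasing2)
  moreover have "lam * dmax V d \<le> objective V d g lam {u, v}"
    using diversity_diametral_pair[OF assms(2,11-13)] assms(3,11,12)
    unfolding objective_def by simp
  ultimately show ?thesis
    unfolding greedy_ratio_eq
    by (rule max_ge_convex_combination[OF _ _ _ OPT_le_gmax_plus_dmax[OF assms(1,2,6) \<open>V \<noteq> {}\<close>]])
qed

end
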